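(* Let $\Xi=(\xi_\sigma)_{\sigma\in[0,\omega_1)}$ be a strictly increasing transfinite sequence of countable ordinals, set $\xi_{\omega_1}=\omega_1$, and for each limit ordinal $\lambda\in[\omega,\omega_1]$ set $\zeta_\lambda=\sup\{\xi_\sigma:\sigma\in[0,\lambda)\}$. Then: (i) the map $U_\Xi$ given by $U_\Xi(\mathbf{1}_{[0,\sigma]})=\mathbf{1}_{[0,\xi_\sigma]}$ for $\sigma\in[0,\omega_1]$ extends uniquely to a linear isometry of $C([0,\omega_1])$ onto $\overline{\operatorname{span}}\{\mathbf{1}_{[0,\xi_\sigma]}:\sigma\in[0,\omega_1]\}$; (ii) $[0,\omega_1]=[0,\xi_0]\cup\bigcup_{\sigma\in[0,\omega_1)}[\xi_\sigma+1,\xi_{\sigma+1}]\cup\bigcup_{\lambda\in[\omega,\omega_1]\text{ limit}}[\zeta_\lambda,\xi_\lambda]$, where the intervals on the right-hand side are pairwise disjoint; (iii) the map $\varphi_\Xi\colon[0,\omega_1]\to[0,\omega_1]$ defined by $\varphi_\Xi(\alpha)=\xi_0$ for $\alpha\in[0,\xi_0]$, $\varphi_\Xi(\alpha)=\xi_{\sigma+1}$ for $\alpha\in[\xi_\sigma+1,\xi_{\sigma+1}]$ with $\sigma\in[0,\omega_1)$, and $\varphi_\Xi(\alpha)=\zeta_\lambda$ for $\alpha\in[\zeta_\lambda,\xi_\lambda]$ with $\lambda\in[\omega,\omega_1]$ a limit ordinal, is continuous and satisfies $\varphi_\Xi\circ\varphi_\Xi=\varphi_\Xi$; hence the composition operator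 $\Phi_\Xi\colon f\mapsto f\circ\varphi_\Xi$ is a contractive projection of $C([0,\omega_1])$ onto $\overline{\operatorname{span}}\{\mathbf{1}_{[0,\xi_\sigma]}:\sigma\in[0,\omega_1]\}$; (iv) the matrix of $\Phi_\Xi$ is given by $(\Phi_\Xi)_{\alpha,\beta}=\delta_{\beta,\xi_0}$ for $\alpha\in[0,\xi_0]$, $(\Phi_\Xi)_{\alpha,\beta}=\delta_{\beta,\xi_{\sigma+1}}$ for $\alpha\in[\xi_\sigma+1,\xi_{\sigma+1}]$ with $\sigma\in[0,\omega_1)$, and $(\Phi_\Xi)_{\alpha,\beta}=\delta_{\beta,\zeta_\lambda}$ for $\alpha\in[\zeta_\lambda,\xi_\lambda]$ with $\lambda\in[\omega,\omega_1]$ a limit ordinal.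
   Context: $\omega$ and $\omega_1$ are the first infinite and first uncountable ordinals; $[0,\omega_1]$ has the order topology and $C([0,\omega_1])$ is the Banach space of continuous scalar-valued functions on it with the sup norm; $0$ is considered a limit ordinal, but limits $\lambda$ above range over $[\omega,\omega_1]$. $\delta_{\alpha,\beta}$ is the Kronecker delta. The matrix of an operator $T$ on $C([0,\omega_1])$ is the unique family of scalars $T_{\alpha,\beta}$ with $\sum_\beta|T_{\alpha,\beta}|<\infty$ and $Tf(\alpha)=\sum_{\beta\in[0,\omega_1]}T_{\alpha,\beta}f(\beta)$ for all $f$ and $\alpha$. *)

theory Defs
  imports "HOL-Analysis.Analysis"
begin

text \<open>Ordinals in [0,omega_1] are modelled by a type 'a that is a well-order with
  bottom (the ordinal 0) and top (omega_1), carrying the order topology, such that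
  every proper initial segment is countable and the set below top is uncountable.\<close>

definition is_omega1_type :: "'a::{linorder_topology, wellorder, order_bot, order_top} itself \<Rightarrow> bool" where
  "is_omega1_type _ \<longleftrightarrow>
     (\<forall>x::'a. x < top \<longrightarrow> countable {..<x}) \<and> \<not> countable {..<(top::'a)}"

definition succ_ord :: "'a::wellorder \<Rightarrow> 'a" where
  "succ_ord x = (LEAST y. x < y)"

definition is_limit :: "'a::linorder \<Rightarrow> bool" where
  "is_limit l \<longleftrightarrow> (\<exists>b. b < l) \<and> (\<forall>b<l. \<exists>c. b < c \<and> c < l)"

definition zeta :: "('a::wellorder \<Rightarrow> 'a) \<Rightarrow> 'a \<Rightarrow> 'a" where
  "zeta xi l = (LEAST z. \<forall>s<l. xi s \<le> z)"

definition ind0 :: "'a::{linorder_topology, order_bot} \<Rightarrow> ('a \<Rightarrow>\<^sub>C real)" where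
  "ind0 a = Bcontfun (indicator {..a})"

definition phi_Xi :: "('a::{wellorder, order_bot, order_top} \<Rightarrow> 'a) \<Rightarrow> 'a \<Rightarrow> 'a" where
  "phi_Xi xi a =
    (if a \<le> xi bot then xi bot
     else if (\<exists>s<top. succ_ord (xi s) \<le> a \<and> a \<le> xi (succ_ord s))
       then xi (succ_ord (SOME s. s < top \<and> succ_ord (xi s) \<le> a \<and> a \<le> xi (succ_ord s)))
     else zeta xi (SOME l. is_limit l \<and> zeta xi l \<le> a \<and> a \<le> xi l))"

definition Phi_Xi :: "('a::{linorder_topology, wellorder, order_bot, order_top} \<Rightarrow> 'a)
    \<Rightarrow> ('a \<Rightarrow>\<^sub>C real) \<Rightarrow> ('a \<Rightarrow>\<^sub>C real)" where
  "Phi_Xi xi f = Bcontfun (apply_bcontfun f \<circ> phi_Xi xi)"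

definition matrix_of :: "(('a::topological_space \<Rightarrow>\<^sub>C real) \<Rightarrow> ('a \<Rightarrow>\<^sub>C real)) \<Rightarrow> 'a \<Rightarrow> 'a \<Rightarrow> real" where
  "matrix_of T = (THE M. \<forall>a. (\<lambda>b. \<bar>M a b\<bar>) summable_on UNIV \<and>
       (\<forall>f. apply_bcontfun (T f) a = (\<Sum>\<^sub>\<infinity>b. M a b * apply_bcontfun f b)))"

end

theory Submission
  imports Defs
begin

text \<open>
  Let \<open>block a\<close> be the least \<open>\<sigma>\<close> with \<open>a \<le> \<xi>\<^sub>\<sigma>\<close>. It is the lower adjoint of \<open>\<xi>\<close>
  (\<open>block a \<le> \<sigma> \<longleftrightarrow> a \<le> \<xi>\<^sub>\<sigma>\<close>), hence monotone, continuous and a left inverse of \<open>\<xi>\<close>, and the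
  intervals in (ii) are exactly its fibres over \<open>0\<close>, over the successors and over the limits.
  The least point of the fibre over \<open>\<sigma>\<close> is \<open>block_start \<sigma>\<close> (\<open>\<xi>\<^sub>\<sigma>\<close>, or \<open>\<zeta>\<^sub>\<sigma>\<close> at a limit), and
  \<open>\<phi>\<^sub>\<Xi> = block_start \<circ> block\<close>. So \<open>f \<mapsto> f \<circ> block\<close> is an isometry sending the indicator
  of \<open>[0,\<sigma>]\<close> to that of \<open>[0,\<xi>\<^sub>\<sigma>]\<close>, and \<open>\<Phi>\<^sub>\<Xi>\<close> factors through it. The indicators of the
  intervals \<open>[0,\<alpha>]\<close> span a dense subspace of \<open>C([0,\<omega>\<^sub>1])\<close>, which gives the uniqueness of the
  isometry and identifies both ranges with the closed span of the indicators of \<open>[0,\<xi>\<^sub>\<sigma>]\<close>.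
  Testing a composition operator \<open>f \<mapsto> f \<circ> g\<close> against these indicators, by transfinite
  induction, shows that its matrix is \<open>\<delta>\<^sub>\<beta>\<^sub>,\<^sub>g\<^sub>(\<^sub>\<alpha>\<^sub>)\<close>.
\<close>

section \<open>Successors and limits in a well-order\<close>

lemma succ_ord_greater: "(x::'a::{wellorder, order_top}) < top \<Longrightarrow> x < succ_ord x"
  unfolding succ_ord_def by (rule LeastI)

lemma succ_ord_le: "(x::'a::wellorder) < y \<Longrightarrow> succ_ord x \<le> y"
  unfolding succ_ord_def by (rule Least_le)

lemma less_succ_ord_iff: "(x::'a::{wellorder, order_top}) < top \<Longrightarrow> y < succ_ord x \<longleftrightarrow> y \<le> x"
  using succ_ord_greater succ_ord_le by (metis leD leI order_le_less_trans)

lemma succ_ord_eq_iff: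
  fixes s t :: "'a::{wellorder, order_top}"
  assumes "s < top" "t < top"
  shows "succ_ord s = succ_ord t \<longleftrightarrow> s = t"
  using less_succ_ord_iff[OF assms(1)] less_succ_ord_iff[OF assms(2)]
    succ_ord_greater[OF assms(1)] succ_ord_greater[OF assms(2)]
  by (metis antisym)

lemma not_is_limit_succ_ord: "(s::'a::{wellorder, order_top}) < top \<Longrightarrow> \<not> is_limit (succ_ord s)"
  using less_succ_ord_iff succ_ord_greater unfolding is_limit_def by (meson leD)

lemma not_is_limit_bot: "\<not> is_limit (bot::'a::{linorder, order_bot})"
  unfolding is_limit_def by auto

lemma succ_ord_neq_bot: "(s::'a::{wellorder, order_bot, order_top}) < top \<Longrightarrow> succ_ord s \<noteq> bot"
  using succ_ord_greater by fastforce

lemma bot_succ_limit_cases: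
  fixes s :: "'a::{wellorder, order_bot, order_top}"
  obtains "s = bot" | t where "t < top" "s = succ_ord t" | "is_limit s"
proof (cases "s = bot \<or> is_limit s")
  case False
  then obtain b where b: "b < s" "\<forall>c. b < c \<longrightarrow> \<not> c < s"
    unfolding is_limit_def using bot.not_eq_extremum by blast
  then have "b < top" using less_le_trans[OF b(1) top_greatest] by blast
  moreover have "succ_ord b = s"
    using b succ_ord_greater[OF \<open>b < top\<close>] succ_ord_le[OF b(1)] by (meson order.not_eq_order_implies_strict)
  ultimately show thesis using that(2) by blast
qed (use that in blast)

section \<open>Continuity on a well-ordered space\<close>

text \<open>In a well-order with a top element \<open>{..x} = {..<succ_ord x}\<close> is open, so continuity only
  has to be checked from the left.\<close>

lemma open_atMost_wellorder: "open {..(x::'a::{linorder_topology, wellorder, order_top})}"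
proof (cases "x = top")
  case False
  then have "{..x} = {..<succ_ord x}" using less_succ_ord_iff top.not_eq_extremum by auto
  then show ?thesis by simp
next
  case True
  then have "{..x} = UNIV" by auto
  then show ?thesis by simp
qed

lemma open_greaterThanAtMost_wellorder: "open {y<..(x::'a::{linorder_topology, wellorder, order_top})}"
  using open_Int[OF open_greaterThan open_atMost_wellorder] by (simp add: greaterThanAtMost_def)

lemma continuous_on_mono_wellorder:
  fixes g :: "'a::{linorder_topology, wellorder, order_top} \<Rightarrow> 'b::linorder_topology"
  assumes mono: "mono g"
    and left: "\<And>x w c. w < x \<Longrightarrow> c < g x \<Longrightarrow> \<exists>y<x. \<forall>z\<in>{y<..x}. c < g z"
  shows "continuous_on UNIV g"
  unfolding continuous_on_open_vimage[OF open_UNIV]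
proof (intro allI impI)
  fix B :: "'b set" assume B: "open B"
  show "open (g -` B \<inter> UNIV)"
  proof (rule Topological_Spaces.openI)
    fix x assume x: "x \<in> g -` B \<inter> UNIV"
    show "\<exists>T. open T \<and> x \<in> T \<and> T \<subseteq> g -` B \<inter> UNIV"
    proof (cases "\<exists>w c. w < x \<and> c < g x")
      case True
      then obtain w c where "w < x" "c < g x" by blast
      obtain b where b: "b < g x" "{b<..g x} \<subseteq> B" using open_left[OF B _ \<open>c < g x\<close>] x by auto
      obtain y where y: "y < x" "\<forall>z\<in>{y<..x}. b < g z" using left[OF \<open>w < x\<close> b(1)] by auto
      have "g z \<in> B" if "z \<in> {y<..x}" for z
        using y(2) that monoD[OF mono, of z x] b(2) by auto
      then show ?thesis
        using open_greaterThanAtMost_wellorder y(1) by (intro exI[of _ "{y<..x}"]) auto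
    next
      case False
      have "g z \<in> B" if "z \<le> x" for z
      proof (cases "z = x")
        case False
        then have "\<not> g z < g x" using \<open>\<not> (\<exists>w c. w < x \<and> c < g x)\<close> that by (auto simp: le_less)
        then have "g z = g x" using monoD[OF mono that] by simp
        then show ?thesis using x by simp
      qed (use x in simp)
      then show ?thesis
        using open_atMost_wellorder by (intro exI[of _ "{..x}"]) auto
    qed
  qed
qed

section \<open>Indicators of initial segments\<close>

lemma continuous_on_indicator_atMost:
  "continuous_on UNIV (indicator {..x::'a::{linorder_topology, wellorder, order_top}} :: 'a \<Rightarrow> real)"
  unfolding continuous_on_open_vimage[OF open_UNIV]
proof (intro allI impI)
  fix B :: "real set"
  have "indicator {..x} -` B \<inter> UNIV = (if 1 \<in> B then {..x} else {}) \<union> (if 0 \<in> B then -{..x} else {})"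
    by (auto simp: indicator_def of_bool_def split: if_splits)
  then show "open (indicator {..x} -` B \<inter> UNIV)"
    using open_atMost_wellorder[of x] by (auto simp: open_Compl)
qed

lemma apply_ind0: "apply_bcontfun (ind0 (x::'a::{linorder_topology, wellorder, order_bot, order_top})) = indicator {..x}"
  unfolding ind0_def
  by (rule Bcontfun_inverse, rule bcontfun_normI[OF continuous_on_indicator_atMost, of _ 1])
    (simp add: indicator_def)

lemma ind0_span_approx:
  fixes f :: "'a::{linorder_topology, wellorder, order_bot, order_top} \<Rightarrow>\<^sub>C real"
  assumes "e > 0"
  shows "\<exists>g\<in>span (range ind0). (\<forall>z\<le>x. \<bar>f z - g z\<bar> \<le> e) \<and> (\<forall>z>x. g z = 0)"
proof (induction x rule: less_induct)
  case (less x)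
  show ?case
  proof (cases "x = bot")
    case True
    have "f bot *\<^sub>R ind0 bot \<in> span (range ind0)" by (intro span_scale span_base) simp
    then show ?thesis using True \<open>e > 0\<close> by (intro bexI[of _ "f bot *\<^sub>R ind0 bot"]) (auto simp: apply_ind0 bot_unique)
  next
    case False
    have "open {z. \<bar>f z - f x\<bar> < e}"
      by (intro open_Collect_less continuous_intros continuous_on_apply_bcontfun)
    moreover have "x \<in> {z. \<bar>f z - f x\<bar> < e}" using \<open>e > 0\<close> by simp
    ultimately obtain y where y: "y < x" "{y<..x} \<subseteq> {z. \<bar>f z - f x\<bar> < e}"
      using open_left False bot.not_eq_extremum by metis
    obtain g where g: "g \<in> span (range ind0)" "\<forall>z\<le>y. \<bar>f z - g z\<bar> \<le> e" "\<forall>z>y. g z = 0"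
      using less[OF y(1)] by blast
    \<comment> \<open>On \<open>(y, x]\<close>, where \<open>g\<close> vanishes, approximate \<open>f\<close> by the constant \<open>f x\<close>.\<close>
    define g' where "g' = g + f x *\<^sub>R (ind0 x - ind0 y)"
    have "g' \<in> span (range ind0)"
      unfolding g'_def by (intro span_add g(1) span_scale span_diff span_base) auto
    moreover have "\<bar>f z - g' z\<bar> \<le> e" if "z \<le> x" for z
    proof (cases "z \<le> y")
      case False
      then have "z \<in> {y<..x}" using that by simp
      then have "\<bar>f z - f x\<bar> < e" using y(2) by blast
      then show ?thesis using g(3) that False by (simp add: g'_def apply_ind0)
    qed (use g(2) that y(1) in \<open>simp add: g'_def apply_ind0\<close>)
    moreover have "g' z = 0" if "z > x" for z
      using g(3) y(1) that by (auto simp: g'_def apply_ind0)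
    ultimately show ?thesis by blast
  qed
qed

lemma closure_span_ind0:
  "closure (span (range ind0)) = (UNIV :: ('a::{linorder_topology, wellorder, order_bot, order_top} \<Rightarrow>\<^sub>C real) set)"
proof -
  have "f \<in> closure (span (range ind0))" for f :: "'a \<Rightarrow>\<^sub>C real"
    unfolding closure_approachable
  proof (intro allI impI)
    fix e :: real assume "e > 0"
    then obtain g where g: "g \<in> span (range ind0)" "\<forall>z. \<bar>f z - g z\<bar> \<le> e/2"
      using ind0_span_approx[where e="e/2" and f=f and x=top] by auto
    have "dist g f \<le> e/2"
      unfolding dist_norm by (rule norm_bound) (use g(2) in \<open>auto simp: abs_minus_commute\<close>)
    then show "\<exists>g\<in>span (range ind0). dist g f < e" using g(1) \<open>e > 0\<close> by force
  qed
  then show ?thesis by auto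
qed

section \<open>Composition operators\<close>

lemma bounded_linear_eq_on_closure_span:
  fixes f g :: "'a::real_normed_vector \<Rightarrow> 'b::real_normed_vector"
  assumes "bounded_linear f" "bounded_linear g" "\<And>x. x \<in> S \<Longrightarrow> f x = g x"
    and "x \<in> closure (span S)"
  shows "f x = g x"
proof -
  have "closed {x. f x = g x}"
    using assms(1,2) by (intro closed_Collect_eq) (auto intro: linear_continuous_on)
  moreover have "span S \<subseteq> {x. f x = g x}"
    using assms(1,2,3) linear_eq_on[of f g] by (auto simp: bounded_linear.linear)
  ultimately show ?thesis using closure_minimal assms(4) by blast
qed

lemma closed_range_idempotent:
  fixes P :: "'a::real_normed_vector \<Rightarrow> 'a"
  assumes "bounded_linear P" "P \<circ> P = P"
  shows "closed (range P)"
proof -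
  have "range P = {x. P x = x}" using assms(2) by (auto simp: fun_eq_iff) (metis rangeI)
  then show ?thesis
    using assms(1) by (auto intro!: closed_Collect_eq continuous_on_id linear_continuous_on)
qed

definition bcontfun_comp :: "('b::topological_space \<Rightarrow> 'a::topological_space)
    \<Rightarrow> ('a \<Rightarrow>\<^sub>C real) \<Rightarrow> ('b \<Rightarrow>\<^sub>C real)" where
  "bcontfun_comp g f = Bcontfun (apply_bcontfun f \<circ> g)"

context
  fixes g :: "'b::topological_space \<Rightarrow> 'a::topological_space"
  assumes cont: "continuous_on UNIV g"
begin

lemma apply_bcontfun_comp: "apply_bcontfun (bcontfun_comp g f) = apply_bcontfun f \<circ> g"
  unfolding bcontfun_comp_def
proof (rule Bcontfun_inverse, rule bcontfun_normI)
  show "continuous_on UNIV (apply_bcontfun f \<circ> g)"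
    using cont by (rule continuous_on_compose) auto
  show "norm ((apply_bcontfun f \<circ> g) x) \<le> norm f" for x
    by (metis comp_apply norm_bounded)
qed

lemma norm_bcontfun_comp_le: "norm (bcontfun_comp g f) \<le> norm f"
  by (rule norm_bound) (metis apply_bcontfun_comp comp_apply norm_bounded)

lemma norm_bcontfun_comp_surj: "surj g \<Longrightarrow> norm (bcontfun_comp g f) = norm f"
  by (intro antisym norm_bcontfun_comp_le norm_bound)
    (metis apply_bcontfun_comp comp_apply norm_bounded surj_f_inv_f)

lemma bounded_linear_bcontfun_comp: "bounded_linear (bcontfun_comp g)"
  by (rule bounded_linear_intro[where K=1])
    (auto intro!: bcontfun_eqI simp: apply_bcontfun_comp norm_bcontfun_comp_le)

end

lemma bcontfun_comp_comp:
  assumes "continuous_on UNIV g" "continuous_on UNIV h"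
  shows "bcontfun_comp (h \<circ> g) f = bcontfun_comp g (bcontfun_comp h f)"
  using assms continuous_on_compose[OF assms(1) continuous_on_subset[OF assms(2)]]
  by (intro bcontfun_eqI) (simp add: apply_bcontfun_comp)

lemma has_sum_single: "((\<lambda>b. if b = c then v else 0) has_sum v) UNIV"
  by (rule has_sum_finite_neutralI[of "{c}"]) auto

lemma matrix_of_bcontfun_comp:
  fixes g :: "'a::{linorder_topology, wellorder, order_bot, order_top} \<Rightarrow> 'a"
  assumes g: "continuous_on UNIV g"
  shows "matrix_of (bcontfun_comp g) a b = (if b = g a then 1 else 0)"
proof -
  define M where "M a b = (if b = g a then 1 else (0::real))" for a b
  let ?represents = "\<lambda>M. \<forall>a. (\<lambda>b. \<bar>M a b\<bar>) summable_on UNIV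
      \<and> (\<forall>f::'a \<Rightarrow>\<^sub>C real. bcontfun_comp g f a = (\<Sum>\<^sub>\<infinity>b. M a b * f b))"
  have represents: "?represents M"
  proof (intro allI conjI)
    fix a and f :: "'a \<Rightarrow>\<^sub>C real"
    have "(\<lambda>b. \<bar>M a b\<bar>) = (\<lambda>b. if b = g a then 1 else 0)" by (auto simp: M_def)
    then show "(\<lambda>b. \<bar>M a b\<bar>) summable_on UNIV"
      unfolding summable_on_def using has_sum_single by metis
    have "(\<lambda>b. M a b * f b) = (\<lambda>b. if b = g a then f (g a) else 0)" by (auto simp: M_def)
    then show "bcontfun_comp g f a = (\<Sum>\<^sub>\<infinity>b. M a b * f b)"
      by (simp add: infsumI[OF has_sum_single] apply_bcontfun_comp[OF g])
  qed
  have unique: "M' = M" if M': "?represents M'" for M'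
  proof (intro ext)
    fix a c
    show "M' a c = M a c"
    proof (induction c rule: less_induct)
      case (less c)
      \<comment> \<open>Below \<open>c\<close> the row is already known, so testing with \<open>ind0 c\<close> isolates the entry at \<open>c\<close>.\<close>
      have "(\<lambda>b. M' a b * ind0 c b)
          = (\<lambda>b. (if b = c then M' a c else 0) + (if b = g a then of_bool (g a < c) else 0))"
        using less by (auto simp: fun_eq_iff apply_ind0 M_def indicator_def le_less)
      then have "((\<lambda>b. M' a b * ind0 c b) has_sum M' a c + of_bool (g a < c)) UNIV"
        by (simp only: has_sum_add has_sum_single)
      moreover have "ind0 c (g a) = (\<Sum>\<^sub>\<infinity>b. M' a b * ind0 c b)"
        using M' by (metis apply_bcontfun_comp[OF g] comp_apply)
      ultimately show "M' a c = M a c"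
        by (auto simp: infsumI apply_ind0 M_def indicator_def le_less)
    qed
  qed
  have "matrix_of (bcontfun_comp g) = M"
    unfolding matrix_of_def by (rule the_equality, fact represents, rule unique)
  then show ?thesis by (simp add: M_def)
qed

lemma Phi_Xi_eq_bcontfun_comp: "Phi_Xi xi = bcontfun_comp (phi_Xi xi)"
  by (simp add: fun_eq_iff Phi_Xi_def bcontfun_comp_def)

section \<open>The block map of a strictly increasing sequence\<close>

lemma zeta_upper: "t < l \<Longrightarrow> xi t \<le> zeta xi (l::'a::{wellorder, order_top})"
  unfolding zeta_def using LeastI[of "\<lambda>z. \<forall>s<l. xi s \<le> z" top] by auto

lemma zeta_least: "(\<And>t. t < l \<Longrightarrow> xi t \<le> z) \<Longrightarrow> zeta xi l \<le> z"
  unfolding zeta_def by (rule Least_le) auto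

locale xi_sequence =
  fixes xi :: "'a::{linorder_topology, wellorder, order_bot, order_top} \<Rightarrow> 'a"
  assumes strict_mono_below_top: "strict_mono_on {..<top} xi"
    and less_top: "\<forall>s<top. xi s < top"
    and xi_top: "xi top = top"
begin

lemma strict_mono_xi: "strict_mono xi"
proof (rule strict_monoI)
  fix s t :: 'a assume "s < t"
  show "xi s < xi t"
  proof (cases "t = top")
    case False
    then have "t < top" using top.not_eq_extremum by blast
    with \<open>s < t\<close> have "s < top" by (rule less_trans)
    show ?thesis
      using strict_mono_onD[OF strict_mono_below_top, of s t] \<open>s < top\<close> \<open>t < top\<close> \<open>s < t\<close> by simp
  next
    case True
    then show ?thesis using \<open>s < t\<close> less_top xi_top by simp
  qed
qed

definition block :: "'a \<Rightarrow> 'a" where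
  "block a = (LEAST s. a \<le> xi s)"

lemma le_xi_block: "a \<le> xi (block a)"
  unfolding block_def by (rule LeastI[of _ top]) (simp add: xi_top)

lemma block_le_iff: "block a \<le> s \<longleftrightarrow> a \<le> xi s"
proof
  show "block a \<le> s \<Longrightarrow> a \<le> xi s"
    using le_xi_block strict_mono_less_eq[OF strict_mono_xi] order_trans by blast
qed (simp add: block_def Least_le)

lemma less_block_iff: "s < block a \<longleftrightarrow> xi s < a"
  using block_le_iff by (meson not_le)

lemma block_xi: "block (xi s) = s"
proof -
  have "block (xi s) \<le> t \<longleftrightarrow> s \<le> t" for t
    by (simp add: block_le_iff strict_mono_less_eq[OF strict_mono_xi])
  then show ?thesis by (meson order.antisym order.refl)
qed

lemma mono_block: "mono block"
  by (rule monoI) (simp add: block_le_iff order_trans[OF _ le_xi_block])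

lemma continuous_on_block: "continuous_on UNIV block"
proof (rule continuous_on_mono_wellorder[OF mono_block])
  fix x w c assume "c < block x"
  then show "\<exists>y<x. \<forall>z\<in>{y<..x}. c < block z"
    by (intro exI[of _ "xi c"]) (auto simp: less_block_iff)
qed

lemma zeta_le_xi: "zeta xi l \<le> xi l"
  by (rule zeta_least) (simp add: strict_mono_less_eq[OF strict_mono_xi])

lemma zeta_le_iff:
  assumes "is_limit l"
  shows "zeta xi l \<le> a \<longleftrightarrow> (\<forall>t<l. xi t < a)"
proof
  assume le: "zeta xi l \<le> a"
  show "\<forall>t<l. xi t < a"
  proof (intro allI impI)
    fix t assume "t < l"
    then obtain c where "t < c" "c < l" using assms unfolding is_limit_def by blast
    then have "xi t < xi c" "xi c \<le> zeta xi l"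
      using strict_mono_less[OF strict_mono_xi] zeta_upper by auto
    then show "xi t < a" using le by simp
  qed
qed (auto intro: zeta_least less_imp_le)

lemma block_vimage: "block -` {s} = {a. s \<le> block a} \<inter> {..xi s}"
  by (auto simp: block_le_iff[symmetric] intro: order.antisym)

lemma block_vimage_bot: "block -` {bot} = {..xi bot}"
  by (simp add: block_vimage)

lemma block_vimage_succ_ord:
  assumes "s < top"
  shows "block -` {succ_ord s} = {succ_ord (xi s)..xi (succ_ord s)}"
proof -
  have "xi s < top" using assms less_top by simp
  have "succ_ord (xi s) \<le> a \<longleftrightarrow> succ_ord s \<le> block a" for a
  proof -
    have "succ_ord (xi s) \<le> a \<longleftrightarrow> xi s < a"
      using less_succ_ord_iff[OF \<open>xi s < top\<close>, of a] by (metis not_le)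
    also have "\<dots> \<longleftrightarrow> succ_ord s \<le> block a"
      using less_succ_ord_iff[OF assms, of "block a"] less_block_iff by (metis not_le)
    finally show ?thesis .
  qed
  then show ?thesis by (simp add: block_vimage set_eq_iff conj_commute)
qed

lemma block_vimage_limit:
  assumes "is_limit l"
  shows "block -` {l} = {zeta xi l..xi l}"
proof -
  have "zeta xi l \<le> a \<longleftrightarrow> l \<le> block a" for a
    unfolding zeta_le_iff[OF assms] less_block_iff[symmetric]
    by (meson less_irrefl not_le less_le_trans)
  then show ?thesis by (simp add: block_vimage set_eq_iff conj_commute)
qed

definition block_start :: "'a \<Rightarrow> 'a" where
  "block_start s = (if is_limit s then zeta xi s else xi s)"

lemma block_start_le_xi: "block_start s \<le> xi s"
  by (simp add: block_start_def zeta_le_xi)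

lemma block_block_start: "block (block_start s) = s"
proof (cases "is_limit s")
  case True
  then have "zeta xi s \<in> block -` {s}" using block_vimage_limit zeta_le_xi by simp
  then show ?thesis using True by (simp add: block_start_def)
qed (simp add: block_start_def block_xi)

lemma xi_le_block_start: "t < s \<Longrightarrow> xi t \<le> block_start s"
  by (simp add: block_start_def zeta_upper less_imp_le strict_mono_less[OF strict_mono_xi])

lemma mono_block_start: "mono block_start"
  by (metis monoI block_start_le_xi xi_le_block_start order_le_less order_trans)

lemma continuous_on_block_start: "continuous_on UNIV block_start"
proof (rule continuous_on_mono_wellorder[OF mono_block_start])
  fix x w c assume "w < x" and c: "c < block_start x"
  obtain t where t: "t < x" "c < xi t \<or> x = succ_ord t"
  proof (cases x rule: bot_succ_limit_cases)
    case 1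
    then show ?thesis using \<open>w < x\<close> by simp
  next
    case (2 t)
    then show ?thesis using that succ_ord_greater by blast
  next
    case 3
    then have "\<not> zeta xi x \<le> c" using c by (simp add: block_start_def)
    then show ?thesis using that zeta_least by (meson not_le)
  qed
  \<comment> \<open>A successor is isolated from the left; at a limit some \<open>\<xi>\<^sub>t\<close> already exceeds \<open>c\<close>.\<close>
  have "c < block_start z" if "t < z" "z \<le> x" for z
  proof (cases "c < xi t")
    case True
    then show ?thesis using xi_le_block_start[OF that(1)] by simp
  next
    case False
    then have "x = succ_ord t" using t(2) by simp
    moreover have "t < top" using less_le_trans[OF t(1) top_greatest] .
    ultimately have "z = x" using that less_succ_ord_iff[of t z] by (auto simp: le_less)
    then show ?thesis using c by simp
  qed
  then show "\<exists>y<x. \<forall>z\<in>{y<..x}. c < block_start z" using t(1) by auto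
qed

lemma phi_Xi_eq: "phi_Xi xi = block_start \<circ> block"
proof
  fix a
  show "phi_Xi xi a = (block_start \<circ> block) a"
  proof (cases "block a" rule: bot_succ_limit_cases)
    case 1
    then show ?thesis
      using block_vimage_bot not_is_limit_bot by (auto simp: phi_Xi_def block_start_def)
  next
    case (2 t)
    have in_succ: "s < top \<and> succ_ord (xi s) \<le> a \<and> a \<le> xi (succ_ord s) \<longleftrightarrow> s = t" for s
      using 2 block_vimage_succ_ord succ_ord_eq_iff by (metis atLeastAtMost_iff vimage_singleton_eq)
    have "\<not> a \<le> xi bot"
      using 2 block_le_iff[of a bot] succ_ord_neq_bot bot_unique by metis
    then show ?thesis
      using 2 in_succ not_is_limit_succ_ord by (auto simp: phi_Xi_def block_start_def)
  next
    case 3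
    have in_limit: "is_limit l \<and> zeta xi l \<le> a \<and> a \<le> xi l \<longleftrightarrow> l = block a" for l
      using 3 block_vimage_limit by (metis atLeastAtMost_iff vimage_singleton_eq)
    have "\<not> a \<le> xi bot"
      using 3 block_vimage_bot not_is_limit_bot by (metis atMost_iff vimage_singleton_eq)
    moreover have "\<not> (\<exists>s<top. succ_ord (xi s) \<le> a \<and> a \<le> xi (succ_ord s))"
      using 3 block_vimage_succ_ord not_is_limit_succ_ord by (metis atLeastAtMost_iff vimage_singleton_eq)
    ultimately show ?thesis
      using 3 in_limit by (auto simp: phi_Xi_def block_start_def)
  qed
qed

lemma continuous_on_phi_Xi: "continuous_on UNIV (phi_Xi xi)"
  unfolding phi_Xi_eq
  by (rule continuous_on_compose[OF continuous_on_block continuous_on_subset[OF continuous_on_block_start]]) simp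

lemma phi_Xi_idem: "phi_Xi xi \<circ> phi_Xi xi = phi_Xi xi"
  by (simp add: phi_Xi_eq fun_eq_iff block_block_start)

lemma blocks_partition:
  shows "UNIV = {..xi bot} \<union> (\<Union>s\<in>{..<top}. {succ_ord (xi s)..xi (succ_ord s)})
          \<union> (\<Union>l\<in>{l. is_limit l}. {zeta xi l..xi l})"
    and "disjoint_family_on (\<lambda>s. {succ_ord (xi s)..xi (succ_ord s)}) {..<top}"
    and "disjoint_family_on (\<lambda>l. {zeta xi l..xi l}) {l. is_limit l}"
    and "\<forall>s<top. {..xi bot} \<inter> {succ_ord (xi s)..xi (succ_ord s)} = {}"
    and "\<forall>l. is_limit l \<longrightarrow> {..xi bot} \<inter> {zeta xi l..xi l} = {}"
    and "\<forall>s<top. \<forall>l. is_limit l \<longrightarrow> {succ_ord (xi s)..xi (succ_ord s)} \<inter> {zeta xi l..xi l} = {}"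
proof -
  have "a \<in> {..xi bot} \<union> (\<Union>s\<in>{..<top}. {succ_ord (xi s)..xi (succ_ord s)})
          \<union> (\<Union>l\<in>{l. is_limit l}. {zeta xi l..xi l})" for a
  proof -
    have a: "a \<in> block -` {block a}" by simp
    show ?thesis
    proof (cases "block a" rule: bot_succ_limit_cases)
      case 1
      then show ?thesis using a by (simp add: block_vimage_bot)
    next
      case (2 t)
      then show ?thesis using a by (auto simp: block_vimage_succ_ord)
    next
      case 3
      then show ?thesis using a by (auto simp: block_vimage_limit)
    qed
  qed
  then show "UNIV = {..xi bot} \<union> (\<Union>s\<in>{..<top}. {succ_ord (xi s)..xi (succ_ord s)})
          \<union> (\<Union>l\<in>{l. is_limit l}. {zeta xi l..xi l})"
    by blast
  have disj: "block -` {s} \<inter> block -` {t} = {}" if "s \<noteq> t" for s t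
    using that by auto
  show "disjoint_family_on (\<lambda>s. {succ_ord (xi s)..xi (succ_ord s)}) {..<top}"
    unfolding disjoint_family_on_def
  proof (intro ballI impI)
    fix s t :: 'a assume "s \<in> {..<top}" "t \<in> {..<top}" "s \<noteq> t"
    then show "{succ_ord (xi s)..xi (succ_ord s)} \<inter> {succ_ord (xi t)..xi (succ_ord t)} = {}"
      using disj[of "succ_ord s" "succ_ord t"] by (simp add: block_vimage_succ_ord succ_ord_eq_iff)
  qed
  show "disjoint_family_on (\<lambda>l. {zeta xi l..xi l}) {l. is_limit l}"
    unfolding disjoint_family_on_def
  proof (intro ballI impI)
    fix l m :: 'a assume "l \<in> {l. is_limit l}" "m \<in> {l. is_limit l}" "l \<noteq> m"
    then show "{zeta xi l..xi l} \<inter> {zeta xi m..xi m} = {}"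
      using disj[of l m] by (simp add: block_vimage_limit)
  qed
  show "\<forall>s<top. {..xi bot} \<inter> {succ_ord (xi s)..xi (succ_ord s)} = {}"
    using disj[of bot "succ_ord _"] succ_ord_neq_bot by (metis block_vimage_bot block_vimage_succ_ord)
  show "\<forall>l. is_limit l \<longrightarrow> {..xi bot} \<inter> {zeta xi l..xi l} = {}"
    using disj[of bot] not_is_limit_bot by (metis block_vimage_bot block_vimage_limit)
  show "\<forall>s<top. \<forall>l. is_limit l \<longrightarrow> {succ_ord (xi s)..xi (succ_ord s)} \<inter> {zeta xi l..xi l} = {}"
    using disj[of "succ_ord _"] not_is_limit_succ_ord by (metis block_vimage_succ_ord block_vimage_limit)
qed

lemma bcontfun_comp_block_ind0: "bcontfun_comp block (ind0 s) = ind0 (xi s)"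
  by (rule bcontfun_eqI)
    (simp add: apply_bcontfun_comp[OF continuous_on_block] apply_ind0 indicator_def block_le_iff)

lemma norm_bcontfun_comp_block: "norm (bcontfun_comp block f) = norm f"
  using norm_bcontfun_comp_surj[OF continuous_on_block] block_xi by (metis surjI)

lemma Phi_Xi_factor: "Phi_Xi xi f = bcontfun_comp block (bcontfun_comp block_start f)"
  unfolding Phi_Xi_eq_bcontfun_comp phi_Xi_eq
  by (rule bcontfun_comp_comp[OF continuous_on_block continuous_on_block_start])

lemma apply_Phi_Xi: "apply_bcontfun (Phi_Xi xi f) = apply_bcontfun f \<circ> block_start \<circ> block"
  using apply_bcontfun_comp[OF continuous_on_phi_Xi, of f]
  by (simp add: Phi_Xi_eq_bcontfun_comp phi_Xi_eq comp_assoc)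

lemma bounded_linear_Phi_Xi: "bounded_linear (Phi_Xi xi)"
  unfolding Phi_Xi_eq_bcontfun_comp by (rule bounded_linear_bcontfun_comp[OF continuous_on_phi_Xi])

lemma norm_Phi_Xi_le: "norm (Phi_Xi xi f) \<le> norm f"
  unfolding Phi_Xi_eq_bcontfun_comp by (rule norm_bcontfun_comp_le[OF continuous_on_phi_Xi])

lemma Phi_Xi_idem: "Phi_Xi xi \<circ> Phi_Xi xi = Phi_Xi xi"
  using bcontfun_comp_comp[OF continuous_on_phi_Xi continuous_on_phi_Xi] phi_Xi_idem
  by (simp add: fun_eq_iff Phi_Xi_eq_bcontfun_comp)

lemma Phi_Xi_ind0_xi: "Phi_Xi xi (ind0 (xi s)) = ind0 (xi s)"
proof -
  have "block_start (block a) \<le> xi s \<longleftrightarrow> a \<le> xi s" for a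
  proof
    assume "block_start (block a) \<le> xi s"
    then have "block (block_start (block a)) \<le> s" by (simp add: block_le_iff)
    then show "a \<le> xi s" by (simp add: block_block_start block_le_iff)
  next
    assume "a \<le> xi s"
    then have "xi (block a) \<le> xi s" by (simp add: block_le_iff strict_mono_less_eq[OF strict_mono_xi])
    then show "block_start (block a) \<le> xi s" using block_start_le_xi order_trans by blast
  qed
  then show ?thesis
    by (intro bcontfun_eqI) (simp add: apply_Phi_Xi apply_ind0 indicator_def)
qed

abbreviation xi_span :: "('a \<Rightarrow>\<^sub>C real) set" where
  "xi_span \<equiv> closure (span (range (\<lambda>s. ind0 (xi s))))"

lemma range_bcontfun_comp_block_subset: "range (bcontfun_comp block) \<subseteq> xi_span"
proof -
  note bl = bounded_linear_bcontfun_comp[OF continuous_on_block]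
  have "bcontfun_comp block ` span (range ind0) = span (bcontfun_comp block ` range ind0)"
    by (rule span_linear_image[OF bounded_linear.linear[OF bl], symmetric])
  also have "bcontfun_comp block ` range ind0 = range (\<lambda>s. ind0 (xi s))"
    by (simp add: image_image bcontfun_comp_block_ind0)
  finally have "bcontfun_comp block ` span (range ind0) = span (range (\<lambda>s. ind0 (xi s)))" .
  then have "bcontfun_comp block ` closure (span (range ind0)) \<subseteq> xi_span"
    by (intro image_closure_subset[OF linear_continuous_on[OF bl] closed_closure]) (simp add: closure_subset)
  then show ?thesis by (simp add: closure_span_ind0)
qed

lemma range_Phi_Xi: "range (Phi_Xi xi) = xi_span"
proof
  show "range (Phi_Xi xi) \<subseteq> xi_span"
    using range_bcontfun_comp_block_subset by (auto simp: Phi_Xi_factor)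
  note bl = bounded_linear_Phi_Xi
  have "range (\<lambda>s. ind0 (xi s)) \<subseteq> range (Phi_Xi xi)"
  proof (rule image_subsetI)
    fix s show "ind0 (xi s) \<in> range (Phi_Xi xi)"
      using rangeI[of "Phi_Xi xi" "ind0 (xi s)"] by (simp add: Phi_Xi_ind0_xi)
  qed
  then have "span (range (\<lambda>s. ind0 (xi s))) \<subseteq> range (Phi_Xi xi)"
    by (rule span_minimal[OF _ linear_subspace_image[OF bounded_linear.linear[OF bl] subspace_UNIV]])
  then show "xi_span \<subseteq> range (Phi_Xi xi)"
    by (rule closure_minimal[OF _ closed_range_idempotent[OF bl Phi_Xi_idem]])
qed

lemma range_bcontfun_comp_block: "range (bcontfun_comp block) = xi_span"
proof
  show "xi_span \<subseteq> range (bcontfun_comp block)"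
    unfolding range_Phi_Xi[symmetric] by (auto simp: Phi_Xi_factor)
qed (rule range_bcontfun_comp_block_subset)

lemma linear_isometry_unique:
  assumes "linear V" "\<And>s. V (ind0 s) = ind0 (xi s)" "\<And>f. norm (V f) = norm f"
  shows "V = bcontfun_comp block"
proof
  fix f
  have "bounded_linear V"
    using assms(1,3) by (intro bounded_linear_intro[where K=1]) (auto simp: linear_add linear_scale)
  moreover note bounded_linear_bcontfun_comp[OF continuous_on_block]
  moreover have "V x = bcontfun_comp block x" if "x \<in> range ind0" for x
    using that by (auto simp: assms(2) bcontfun_comp_block_ind0)
  ultimately show "V f = bcontfun_comp block f"
    by (rule bounded_linear_eq_on_closure_span[where S="range ind0"]) (simp_all add: closure_span_ind0)
qed

lemma matrix_of_Phi_Xi: "matrix_of (Phi_Xi xi) a b = (if b = block_start (block a) then 1 else 0)"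
  using matrix_of_bcontfun_comp[OF continuous_on_phi_Xi, of a b]
  by (simp add: Phi_Xi_eq_bcontfun_comp phi_Xi_eq)

lemma matrix_of_Phi_Xi_blocks:
  "\<forall>a b. (a \<le> xi bot \<longrightarrow> matrix_of (Phi_Xi xi) a b = (if b = xi bot then 1 else 0))
   \<and> (\<forall>s<top. succ_ord (xi s) \<le> a \<and> a \<le> xi (succ_ord s) \<longrightarrow>
          matrix_of (Phi_Xi xi) a b = (if b = xi (succ_ord s) then 1 else 0))
   \<and> (\<forall>l. is_limit l \<and> zeta xi l \<le> a \<and> a \<le> xi l \<longrightarrow>
          matrix_of (Phi_Xi xi) a b = (if b = zeta xi l then 1 else 0))"
proof (intro conjI allI impI)
  fix a b :: 'a
  assume "a \<le> xi bot"
  then have "block a = bot" using block_vimage_bot by (metis atMost_iff vimage_singleton_eq)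
  then show "matrix_of (Phi_Xi xi) a b = (if b = xi bot then 1 else 0)"
    by (simp add: matrix_of_Phi_Xi block_start_def not_is_limit_bot)
next
  fix a b s :: 'a assume "s < top" "succ_ord (xi s) \<le> a \<and> a \<le> xi (succ_ord s)"
  then have "block a = succ_ord s" using block_vimage_succ_ord by (metis atLeastAtMost_iff vimage_singleton_eq)
  then show "matrix_of (Phi_Xi xi) a b = (if b = xi (succ_ord s) then 1 else 0)"
    using not_is_limit_succ_ord[OF \<open>s < top\<close>] by (simp add: matrix_of_Phi_Xi block_start_def)
next
  fix a b l :: 'a assume l: "is_limit l \<and> zeta xi l \<le> a \<and> a \<le> xi l"
  then have "block a = l" using block_vimage_limit by (metis atLeastAtMost_iff vimage_singleton_eq)
  then show "matrix_of (Phi_Xi xi) a b = (if b = zeta xi l then 1 else 0)"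
    using l by (simp add: matrix_of_Phi_Xi block_start_def)
qed

end

theorem lemma3p2:
  fixes xi :: "'a::{linorder_topology, wellorder, order_bot, order_top} \<Rightarrow> 'a"
  assumes omega1: "is_omega1_type TYPE('a)"
    and mono: "strict_mono_on {..<top} xi"
    and ctbl: "\<forall>s<top. xi s < top"
    and top: "xi top = top"
  shows
   "(\<exists>!U. linear U \<and> (\<forall>s. U (ind0 s) = ind0 (xi s)) \<and> (\<forall>f. norm (U f) = norm f)
        \<and> range U = closure (span (range (\<lambda>s. ind0 (xi s)))))
    \<and>
    (UNIV = {..xi bot} \<union> (\<Union>s\<in>{..<top}. {succ_ord (xi s)..xi (succ_ord s)})
              \<union> (\<Union>l\<in>{l. is_limit l}. {zeta xi l..xi l})
     \<and> disjoint_family_on (\<lambda>s. {succ_ord (xi s)..xi (succ_ord s)}) {..<top}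
     \<and> disjoint_family_on (\<lambda>l. {zeta xi l..xi l}) {l. is_limit l}
     \<and> (\<forall>s<top. {..xi bot} \<inter> {succ_ord (xi s)..xi (succ_ord s)} = {})
     \<and> (\<forall>l. is_limit l \<longrightarrow> {..xi bot} \<inter> {zeta xi l..xi l} = {})
     \<and> (\<forall>s<top. \<forall>l. is_limit l \<longrightarrow> {succ_ord (xi s)..xi (succ_ord s)} \<inter> {zeta xi l..xi l} = {}))
    \<and>
    (continuous_on UNIV (phi_Xi xi) \<and> phi_Xi xi \<circ> phi_Xi xi = phi_Xi xi
     \<and> linear (Phi_Xi xi) \<and> (\<forall>f. norm (Phi_Xi xi f) \<le> norm f)
     \<and> Phi_Xi xi \<circ> Phi_Xi xi = Phi_Xi xi
     \<and> range (Phi_Xi xi) = closure (span (range (\<lambda>s. ind0 (xi s)))))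
    \<and>
    (\<forall>a b. (a \<le> xi bot \<longrightarrow> matrix_of (Phi_Xi xi) a b = (if b = xi bot then 1 else 0))
       \<and> (\<forall>s<top. succ_ord (xi s) \<le> a \<and> a \<le> xi (succ_ord s) \<longrightarrow>
              matrix_of (Phi_Xi xi) a b = (if b = xi (succ_ord s) then 1 else 0))
       \<and> (\<forall>l. is_limit l \<and> zeta xi l \<le> a \<and> a \<le> xi l \<longrightarrow>
              matrix_of (Phi_Xi xi) a b = (if b = zeta xi l then 1 else 0)))"
proof -
  interpret xi_sequence xi using mono ctbl top by unfold_locales
  have isometry: "\<exists>!U. linear U \<and> (\<forall>s. U (ind0 s) = ind0 (xi s)) \<and> (\<forall>f. norm (U f) = norm f)
        \<and> range U = closure (span (range (\<lambda>s. ind0 (xi s))))"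
  proof (rule ex1I[of _ "bcontfun_comp block"])
    show "linear (bcontfun_comp block) \<and> (\<forall>s. bcontfun_comp block (ind0 s) = ind0 (xi s))
        \<and> (\<forall>f. norm (bcontfun_comp block f) = norm f)
        \<and> range (bcontfun_comp block) = closure (span (range (\<lambda>s. ind0 (xi s))))"
      by (intro conjI allI) (fact bounded_linear.linear[OF bounded_linear_bcontfun_comp[OF continuous_on_block]]
          bcontfun_comp_block_ind0 norm_bcontfun_comp_block range_bcontfun_comp_block)+
  next
    fix V assume "linear V \<and> (\<forall>s. V (ind0 s) = ind0 (xi s)) \<and> (\<forall>f. norm (V f) = norm f)
        \<and> range V = closure (span (range (\<lambda>s. ind0 (xi s))))"
    then show "V = bcontfun_comp block" by (intro linear_isometry_unique) auto
  qed
  show ?thesis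
    by (intro conjI) (fact isometry blocks_partition continuous_on_phi_Xi phi_Xi_idem
        bounded_linear.linear[OF bounded_linear_Phi_Xi] allI[OF norm_Phi_Xi_le] Phi_Xi_idem
        range_Phi_Xi matrix_of_Phi_Xi_blocks)+
qed

end
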